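(* Assume $\min\{m,n\}=2$. Let $d\in\{2,3\}$ and let $K\subset M^{m\times n}$ be a $d$-dimensional subspace without Rank-$1$ connections. Then there exists $\beta\in\mathbb{R}^{q_0}\setminus\{0\}$ with $\sum_{k=1}^{q_0}\beta_kM_k(X)\ge0$ for all $X\in K$ and $\sum_k\beta_kM_k\not\equiv0$ on $K$, where $M_1,\dots,M_{q_0}$ are all the $2\times2$ minors of $m\times n$ matrices.
   Context: A set has Rank-$1$ connections if it contains $A\ne B$ with $\mathrm{Rank}(A-B)=1$. *)

theory Defs
  imports "HOL-Analysis.Analysis"
begin

definition has_rank1_connections :: "(real^'n^'m) set \<Rightarrow> bool" where
  "has_rank1_connections K \<longleftrightarrow> (\<exists>A\<in>K. \<exists>B\<in>K. A \<noteq> B \<and> rank (A - B) = 1)"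

definition minor_indices :: "('m::{finite,linorder} \<times> 'm \<times> 'n::{finite,linorder} \<times> 'n) set" where
  "minor_indices = {(i, j, k, l). i < j \<and> k < l}"

definition minor2 :: "('m \<times> 'm \<times> 'n \<times> 'n) \<Rightarrow> real^'n^'m \<Rightarrow> real" where
  "minor2 p X = (case p of (i, j, k, l) \<Rightarrow> X$i$k * X$j$l - X$i$l * X$j$k)"

end

theory Submission
  imports Defs
begin

(* If the convex hull of the minor vectors (M_p(X))_p of the unit matrices X of K avoids 0,
   a separating hyperplane gives \<beta> with \<Sum>\<^sub>p \<beta>_p M_p > 0 on K - {0}.  Otherwise some positive
   combination \<Sum> w_X M_p(X) of unit matrices X \<in> K vanishes for every minor p.  For 2 \<times> n
   matrices with rows u_X, v_X this says that \<Sum> w_X u_X v_X\<^sup>T is symmetric; a maximiser z of the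
   Rayleigh quotient \<Sum> w (u\<cdot>z)(v\<cdot>z) / \<Sum> w (u\<cdot>z)\<^sup>2 over the span of the u_X then makes the second
   row of Y = \<Sum> w_X (u_X\<cdot>z) X \<in> K a multiple of its nonzero first row, so Y has rank one.
   The m \<times> 2 case follows by transposition. *)

lemma linear_coeff_eq_0_if_quadratic_nonneg:
  fixes a b :: real
  assumes nonneg: "\<And>t. 0 \<le> t * b + t\<^sup>2 * a"
  shows "b = 0"
proof (rule ccontr)
  assume "b \<noteq> 0"
  define c where "c = \<bar>a\<bar> + 1"
  have "c > 0" "a - c < 0" by (auto simp: c_def)
  have "(- b / c) * b + (- b / c)\<^sup>2 * a = b\<^sup>2 * (a - c) / c\<^sup>2"
    using \<open>c > 0\<close> by (simp add: field_simps power2_eq_square)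
  also have "\<dots> < 0"
    using \<open>b \<noteq> 0\<close> \<open>c > 0\<close> \<open>a - c < 0\<close> by (simp add: divide_neg_pos mult_pos_neg)
  finally show False using nonneg[of "- b / c"] by simp
qed

lemma bilinear_sym_quadratic_expand:
  assumes "bilinear P" "\<And>x y. P x y = P y x"
  shows "P (z + t *\<^sub>R y) (z + t *\<^sub>R y) = P z z + t * (2 * P z y) + t\<^sup>2 * P y y"
  using assms by (simp add: bilinear_ladd bilinear_radd bilinear_lmul bilinear_rmul
      power2_eq_square algebra_simps)

lemma psd_bilinear_null_vector_orthogonal:
  fixes P :: "'a::real_vector \<Rightarrow> 'a \<Rightarrow> real"
  assumes P: "bilinear P" "\<And>x y. P x y = P y x"
    and U: "subspace U" and psd: "\<And>x. x \<in> U \<Longrightarrow> 0 \<le> P x x"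
    and z: "z \<in> U" "P z z = 0" and y: "y \<in> U"
  shows "P z y = 0"
proof -
  have "0 \<le> t * (2 * P z y) + t\<^sup>2 * P y y" for t
    using psd[of "z + t *\<^sub>R y"] U z y
    by (simp add: bilinear_sym_quadratic_expand[OF P] subspace_add subspace_scale)
  then show ?thesis
    using linear_coeff_eq_0_if_quadratic_nonneg by fastforce
qed

lemma bilinear_generalized_eigenvector:
  fixes G N :: "'a::euclidean_space \<Rightarrow> 'a \<Rightarrow> real"
  assumes G: "bilinear G" "\<And>x y. G x y = G y x"
    and N: "bilinear N" "\<And>x y. N x y = N y x"
    and U: "subspace U" "U \<noteq> {0}"
    and pos: "\<And>x. x \<in> U \<Longrightarrow> x \<noteq> 0 \<Longrightarrow> 0 < G x x"
  shows "\<exists>z\<in>U. z \<noteq> 0 \<and> (\<exists>\<mu>. \<forall>y\<in>U. N z y = \<mu> * G z y)"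
proof -
  define S where "S = U \<inter> sphere 0 1"
  have "compact S"
    unfolding S_def by (intro closed_Int_compact closed_subspace U compact_sphere)
  obtain x where "x \<in> U" "x \<noteq> 0"
    using U subspace_0 by blast
  then have "x /\<^sub>R norm x \<in> S"
    using U by (simp add: S_def subspace_scale)
  then have "S \<noteq> {}" by blast
  have "continuous_on S (\<lambda>z. N z z / G z z)"
    using pos by (intro continuous_on_divide bilinear_continuous_on_compose[OF _ _ N(1)]
        bilinear_continuous_on_compose[OF _ _ G(1)] continuous_on_id) (force simp: S_def)
  then obtain z where z: "z \<in> S" and max: "\<And>x. x \<in> S \<Longrightarrow> N x x / G x x \<le> N z z / G z z"
    using continuous_attains_sup[OF \<open>compact S\<close> \<open>S \<noteq> {}\<close>] by blast
  define \<mu> where "\<mu> = N z z / G z z"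
  define P where "P x y = \<mu> * G x y - N x y" for x y
  have "z \<in> U" "z \<noteq> 0" using z by (auto simp: S_def)
  have P_bilinear: "bilinear P"
    unfolding bilinear_def linear_iff P_def
    by (simp add: bilinear_ladd bilinear_radd bilinear_lmul bilinear_rmul G(1) N(1) algebra_simps)
  have "0 \<le> P x x" if "x \<in> U" for x
  proof (cases "x = 0")
    case True then show ?thesis using bilinear_lzero[OF P_bilinear] by simp
  next
    case False
    have "x /\<^sub>R norm x \<in> S" using that False U by (simp add: S_def subspace_scale)
    from max[OF this] have "N x x / G x x \<le> \<mu>"
      using False by (simp add: \<mu>_def bilinear_lmul bilinear_rmul G(1) N(1))
    then show ?thesis
      using pos[OF that False] by (simp add: P_def divide_le_eq mult.commute)
  qed
  moreover have "P z z = 0"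
    using pos[OF \<open>z \<in> U\<close> \<open>z \<noteq> 0\<close>] by (simp add: P_def \<mu>_def)
  moreover have "P x y = P y x" for x y
    by (simp add: P_def G(2) N(2))
  ultimately have "P z y = 0" if "y \<in> U" for y
    using psd_bilinear_null_vector_orthogonal[OF P_bilinear _ U(1)] \<open>z \<in> U\<close> that by blast
  then show ?thesis
    using \<open>z \<in> U\<close> \<open>z \<noteq> 0\<close> unfolding P_def by (metis eq_iff_diff_eq_0)
qed

lemma bilinear_weighted_inner_products:
  "bilinear (\<lambda>y z. \<Sum>X\<in>C. w X * (a X \<bullet> y) * (b X \<bullet> z))"
  unfolding bilinear_def linear_iff
  by (simp add: inner_add_right sum.distrib sum_distrib_left algebra_simps)

lemma symmetric_pairing_collinear_combination:
  fixes u v :: "'x \<Rightarrow> 'a::euclidean_space"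
  assumes fin: "finite C" and w: "\<And>X. X \<in> C \<Longrightarrow> 0 < w X" and nz: "\<exists>X\<in>C. u X \<noteq> 0"
    and sym: "\<And>y z. (\<Sum>X\<in>C. w X * (u X \<bullet> y) * (v X \<bullet> z))
                    = (\<Sum>X\<in>C. w X * (u X \<bullet> z) * (v X \<bullet> y))"
  shows "\<exists>c \<mu>. (\<Sum>X\<in>C. c X *\<^sub>R u X) \<noteq> 0
           \<and> (\<Sum>X\<in>C. c X *\<^sub>R v X) = \<mu> *\<^sub>R (\<Sum>X\<in>C. c X *\<^sub>R u X)"
proof -
  define G where "G y z = (\<Sum>X\<in>C. w X * (u X \<bullet> y) * (u X \<bullet> z))" for y z
  define N where "N y z = (\<Sum>X\<in>C. w X * (u X \<bullet> y) * (v X \<bullet> z))" for y z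
  define U where "U = span (u ` C)"
  have G_bilinear: "bilinear G" and N_bilinear: "bilinear N"
    unfolding G_def N_def by (fact bilinear_weighted_inner_products)+
  have G_sym: "G y z = G z y" for y z
    unfolding G_def by (simp add: mult_ac)
  have N_sym: "N y z = N z y" for y z
    unfolding N_def by (rule sym)
  have U_perp: "G x y = 0" "N y x = 0" if "\<And>X. X \<in> C \<Longrightarrow> u X \<bullet> y = 0" for x y
    using that by (simp_all add: G_def N_def)
  have G_pos: "0 < G z z" if "z \<in> U" "z \<noteq> 0" for z
  proof -
    have "0 \<le> G z z" unfolding G_def
      using w by (intro sum_nonneg) (simp add: mult.assoc less_imp_le)
    moreover have "G z z \<noteq> 0"
    proof
      assume "G z z = 0"
      then have "\<forall>X\<in>C. w X * (u X \<bullet> z) * (u X \<bullet> z) = 0"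
        unfolding G_def using w fin
        by (subst (asm) sum_nonneg_eq_0_iff) (auto simp: mult.assoc less_imp_le)
      then have "\<forall>X\<in>C. u X \<bullet> z = 0"
        using w by fastforce
      then have "orthogonal z z"
        using \<open>z \<in> U\<close> unfolding U_def
        by (intro orthogonal_to_span[of z "u ` C" z]) (auto simp: orthogonal_def inner_commute)
      then show False using \<open>z \<noteq> 0\<close> by (simp add: orthogonal_def)
    qed
    ultimately show ?thesis by linarith
  qed
  have "U \<noteq> {0}"
    using nz unfolding U_def by (auto intro: span_base)
  then obtain z \<mu> where z: "z \<in> U" "z \<noteq> 0" and eigen: "\<And>y. y \<in> U \<Longrightarrow> N z y = \<mu> * G z y"
    using bilinear_generalized_eigenvector[OF G_bilinear G_sym N_bilinear N_sym subspace_span]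
      G_pos unfolding U_def by metis
  have eigen_all: "N z y = \<mu> * G z y" for y
  proof -
    obtain y1 y2 where y1: "y1 \<in> U" and y2: "\<And>x. x \<in> U \<Longrightarrow> orthogonal y2 x" and "y = y1 + y2"
      using orthogonal_subspace_decomp_exists[of "u ` C" y] unfolding U_def by blast
    have "\<And>X. X \<in> C \<Longrightarrow> u X \<bullet> y2 = 0"
      using y2 unfolding U_def orthogonal_def by (metis imageI inner_commute span_base)
    then have "G z y2 = 0" "N z y2 = 0"
      using U_perp N_sym by auto
    then show ?thesis
      using eigen[OF y1] \<open>y = y1 + y2\<close>
      by (simp add: bilinear_radd[OF G_bilinear] bilinear_radd[OF N_bilinear])
  qed
  define c where "c X = w X * (u X \<bullet> z)" for X
  define g where "g = (\<Sum>X\<in>C. c X *\<^sub>R u X)"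
  define h where "h = (\<Sum>X\<in>C. c X *\<^sub>R v X)"
  have g_inner: "g \<bullet> y = G z y" and h_inner: "h \<bullet> y = N z y" for y
    by (simp_all add: g_def h_def G_def N_def c_def inner_sum_left)
  have "(h - \<mu> *\<^sub>R g) \<bullet> y = 0" for y
    by (simp add: inner_diff_left g_inner h_inner eigen_all)
  then have "h = \<mu> *\<^sub>R g"
    by (metis eq_iff_diff_eq_0 inner_eq_zero_iff)
  moreover have "g \<noteq> 0"
    using G_pos[OF z] g_inner[of z] by auto
  ultimately show ?thesis
    unfolding g_def h_def by blast
qed

lemma weighted_pairing_symmetric:
  fixes u v :: "'x \<Rightarrow> real^'n::{finite,linorder}"
  assumes alt: "\<And>k l. k < l \<Longrightarrow> (\<Sum>X\<in>C. w X * (u X $ k * v X $ l - u X $ l * v X $ k)) = 0"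
  shows "(\<Sum>X\<in>C. w X * (u X \<bullet> y) * (v X \<bullet> z)) = (\<Sum>X\<in>C. w X * (u X \<bullet> z) * (v X \<bullet> y))"
proof -
  have basis: "(\<Sum>X\<in>C. w X * (u X $ k * v X $ l)) = (\<Sum>X\<in>C. w X * (u X $ l * v X $ k))" for k l
  proof (cases k l rule: linorder_cases)
    case less
    then show ?thesis using alt[OF less] by (simp add: right_diff_distrib sum_subtractf)
  next
    case greater
    then show ?thesis using alt[OF greater] by (simp add: right_diff_distrib sum_subtractf)
  qed simp
  have "(\<lambda>y z. \<Sum>X\<in>C. w X * (u X \<bullet> y) * (v X \<bullet> z)) = (\<lambda>y z. \<Sum>X\<in>C. w X * (v X \<bullet> y) * (u X \<bullet> z))"
  proof (rule bilinear_eq_stdbasis[OF bilinear_weighted_inner_products bilinear_weighted_inner_products])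
    fix i j :: "real^'n::{finite,linorder}" assume "i \<in> Basis" "j \<in> Basis"
    then obtain k l where "i = axis k 1" "j = axis l 1"
      by (auto simp: Basis_vec_def)
    then show "(\<Sum>X\<in>C. w X * (u X \<bullet> i) * (v X \<bullet> j)) = (\<Sum>X\<in>C. w X * (v X \<bullet> i) * (u X \<bullet> j))"
      using basis[of k l] by (simp add: inner_axis mult_ac)
  qed
  then show ?thesis by (simp add: fun_eq_iff mult_ac)
qed

lemma rank_eq_1_if_rows_parallel:
  fixes Y :: "real^'n::finite^'m::finite"
  assumes "Y \<noteq> 0" and "\<And>i. \<exists>t. Y $ i = t *\<^sub>R g"
  shows "rank Y = 1"
proof -
  have "rows Y \<subseteq> span {g}"
    using assms(2) by (auto simp: rows_def row_def span_breakdown_eq vec_nth_inverse intro: span_mul span_base)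
  then have "rank Y \<le> dim (span {g})"
    unfolding row_rank_def by (rule dim_subset)
  also have "\<dots> \<le> 1"
    using dim_le_card[of "{g}" "{g}"] by simp
  finally show ?thesis
    using assms(1) rank_eq_0[of Y] by simp
qed

lemma rank1_in_span_if_weighted_minors_vanish_two_rows:
  fixes C :: "(real^'n::{finite,linorder}^'m::{finite,linorder}) set"
  assumes two_rows: "CARD('m) = 2" and fin: "finite C" and w: "\<And>X. X \<in> C \<Longrightarrow> 0 < w X"
    and nz: "\<exists>X\<in>C. X \<noteq> 0"
    and minors: "\<And>p. p \<in> minor_indices \<Longrightarrow> (\<Sum>X\<in>C. w X * minor2 p X) = 0"
  shows "\<exists>Y\<in>span C. rank Y = 1"
proof -
  obtain a b :: 'm where "UNIV = {a, b}" "a \<noteq> b"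
    using two_rows unfolding card_2_iff by blast
  then obtain r1 r2 :: 'm where "r1 < r2" and rows: "\<And>i. i = r1 \<or> i = r2"
    by (metis UNIV_I insertE empty_iff neqE)
  show ?thesis
  proof (cases "\<exists>X\<in>C. X $ r1 \<noteq> 0")
    case True
    have "(\<Sum>X\<in>C. w X * ((X $ r1) $ k * (X $ r2) $ l - (X $ r1) $ l * (X $ r2) $ k)) = 0"
      if "k < l" for k l
      using minors[of "(r1, r2, k, l)"] \<open>r1 < r2\<close> that
      by (simp add: minor_indices_def minor2_def)
    then have sym: "(\<Sum>X\<in>C. w X * (X $ r1 \<bullet> y) * (X $ r2 \<bullet> z))
                  = (\<Sum>X\<in>C. w X * (X $ r1 \<bullet> z) * (X $ r2 \<bullet> y))" for y z
      by (rule weighted_pairing_symmetric)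
    have "\<exists>c \<mu>. (\<Sum>X\<in>C. c X *\<^sub>R X $ r1) \<noteq> 0
                 \<and> (\<Sum>X\<in>C. c X *\<^sub>R X $ r2) = \<mu> *\<^sub>R (\<Sum>X\<in>C. c X *\<^sub>R X $ r1)"
      by (rule symmetric_pairing_collinear_combination[OF fin _ True sym]) (rule w)
    then obtain c \<mu> where
      g: "(\<Sum>X\<in>C. c X *\<^sub>R X $ r1) \<noteq> 0" and
      h: "(\<Sum>X\<in>C. c X *\<^sub>R X $ r2) = \<mu> *\<^sub>R (\<Sum>X\<in>C. c X *\<^sub>R X $ r1)"
      by blast
    define Y where "Y = (\<Sum>X\<in>C. c X *\<^sub>R X)"
    have Y_rows: "Y $ r1 = (\<Sum>X\<in>C. c X *\<^sub>R X $ r1)" "Y $ r2 = (\<Sum>X\<in>C. c X *\<^sub>R X $ r2)"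
      by (simp_all add: Y_def sum_component)
    have "Y \<noteq> 0"
      using g Y_rows(1) by auto
    moreover have "\<exists>t. Y $ i = t *\<^sub>R Y $ r1" for i
      using rows[of i] h Y_rows by (metis scaleR_one)
    ultimately have "rank Y = 1"
      by (rule rank_eq_1_if_rows_parallel)
    moreover have "Y \<in> span C"
      unfolding Y_def by (intro span_sum span_mul span_base)
    ultimately show ?thesis by blast
  next
    case False
    then obtain X where "X \<in> C" "X \<noteq> 0" "X $ r1 = 0 *\<^sub>R X $ r2"
      using nz by auto
    moreover have "\<exists>t. X $ i = t *\<^sub>R X $ r2" for i
      using rows[of i] \<open>X $ r1 = 0 *\<^sub>R X $ r2\<close> by (metis scaleR_one)
    ultimately have "rank X = 1"
      using rank_eq_1_if_rows_parallel by blast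
    then show ?thesis
      using \<open>X \<in> C\<close> span_base by blast
  qed
qed

lemma minor2_transpose: "minor2 (k, l, i, j) (transpose X) = minor2 (i, j, k, l) X"
  by (simp add: minor2_def transpose_def algebra_simps)

lemma linear_transpose: "linear (transpose :: 'a::real_algebra_1^'n^'m \<Rightarrow> 'a^'m^'n)"
  by (rule linearI) (simp_all add: transpose_def vec_eq_iff)

lemma rank1_in_span_if_weighted_minors_vanish:
  fixes C :: "(real^'n::{finite,linorder}^'m::{finite,linorder}) set"
  assumes two: "min CARD('m) CARD('n) = 2" and fin: "finite C" and w: "\<And>X. X \<in> C \<Longrightarrow> 0 < w X"
    and nz: "\<exists>X\<in>C. X \<noteq> 0"
    and minors: "\<And>p. p \<in> minor_indices \<Longrightarrow> (\<Sum>X\<in>C. w X * minor2 p X) = 0"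
  shows "\<exists>Y\<in>span C. rank Y = 1"
proof (cases "CARD('m) = 2")
  case True
  then show ?thesis
    using assms by (intro rank1_in_span_if_weighted_minors_vanish_two_rows[where w=w]) auto
next
  case False
  then have "CARD('n) = 2"
    using two by (auto simp: min_def split: if_splits)
  have inj: "inj_on transpose C"
    by (simp add: inj_on_def)
  have minors': "(\<Sum>X\<in>transpose ` C. w (transpose X) * minor2 p X) = 0" if "p \<in> minor_indices" for p
  proof -
    obtain i j k l where p: "p = (i, j, k, l)" by (cases p)
    then have "(k, l, i, j) \<in> minor_indices"
      using that by (simp add: minor_indices_def)
    then show ?thesis
      using minors by (simp add: sum.reindex[OF inj] p minor2_transpose)
  qed
  obtain X where "X \<in> C" "X \<noteq> 0"
    using nz by blast
  then have nz': "\<exists>X\<in>transpose ` C. X \<noteq> 0"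
    using linear_0[OF linear_transpose] by (metis image_eqI transpose_iff)
  have "\<exists>Y\<in>span (transpose ` C). rank Y = 1"
    using \<open>CARD('n) = 2\<close> fin w nz' minors'
    by (intro rank1_in_span_if_weighted_minors_vanish_two_rows[where w="\<lambda>Z. w (transpose Z)"]) auto
  then obtain Y where "Y \<in> span (transpose ` C)" "rank Y = 1"
    by blast
  moreover have "transpose ` span (transpose ` C) = span C"
    by (simp add: span_linear_image[OF linear_transpose, symmetric] image_image)
  ultimately show ?thesis
    by (metis imageI rank_transpose)
qed

lemma compact_positive_functional_or_positive_combination:
  fixes S :: "'a::euclidean_space set"
  assumes "compact S"
  obtains a where "\<And>x. x \<in> S \<Longrightarrow> 0 < a \<bullet> x"
  | C w where "finite C" "C \<subseteq> S" "C \<noteq> {}" "\<And>x. x \<in> C \<Longrightarrow> 0 < w x" "(\<Sum>x\<in>C. w x *\<^sub>R x) = 0"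
proof (cases "0 \<in> convex hull S")
  case False
  have "closed (convex hull S)"
    using assms by (simp add: compact_imp_closed compact_convex_hull)
  then obtain a b where "0 < b" "\<forall>x\<in>convex hull S. b < a \<bullet> x"
    using separating_hyperplane_closed_0[OF convex_convex_hull _ False] by blast
  then have "0 < a \<bullet> x" if "x \<in> S" for x
    using hull_inc[OF that, of convex] by force
  then show ?thesis
    by (rule that(1))
next
  case True
  then obtain T u where T: "finite T" "T \<subseteq> S" "\<And>x. x \<in> T \<Longrightarrow> 0 \<le> u x" "sum u T = 1"
    and zero: "(\<Sum>x\<in>T. u x *\<^sub>R x) = 0"
    unfolding convex_hull_explicit by blast
  define C where "C = {x \<in> T. 0 < u x}"
  show ?thesis
  proof (rule that(2))
    show "finite C" "C \<subseteq> S" "\<And>x. x \<in> C \<Longrightarrow> 0 < u x"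
      using T by (auto simp: C_def)
    have "(\<Sum>x\<in>C. u x) = sum u T"
      using T by (intro sum.mono_neutral_left) (auto simp: C_def less_le)
    then show "C \<noteq> {}"
      using T(4) by auto
    have "(\<Sum>x\<in>C. u x *\<^sub>R x) = (\<Sum>x\<in>T. u x *\<^sub>R x)"
      using T by (intro sum.mono_neutral_left) (auto simp: C_def less_le)
    then show "(\<Sum>x\<in>C. u x *\<^sub>R x) = 0"
      using zero by simp
  qed
qed

definition minor_vector :: "real^'n::{finite,linorder}^'m::{finite,linorder} \<Rightarrow> real^('m \<times> 'm \<times> 'n \<times> 'n)"
  where "minor_vector X = (\<chi> p. if p \<in> minor_indices then minor2 p X else 0)"

lemma inner_minor_vector: "a \<bullet> minor_vector X = (\<Sum>p\<in>minor_indices. a $ p * minor2 p X)"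
proof -
  have "a \<bullet> minor_vector X = (\<Sum>p\<in>UNIV. if p \<in> minor_indices then a $ p * minor2 p X else 0)"
    unfolding minor_vector_def inner_vec_def by (intro sum.cong) auto
  then show ?thesis
    by (simp add: sum.inter_restrict[symmetric])
qed

lemma minor2_scaleR: "minor2 p (c *\<^sub>R X) = c\<^sup>2 * minor2 p X"
  by (cases p) (simp add: minor2_def power2_eq_square algebra_simps)

lemma minor_vector_scaleR: "minor_vector (c *\<^sub>R X) = c\<^sup>2 *\<^sub>R minor_vector X"
  by (simp add: minor_vector_def vec_eq_iff minor2_scaleR)

lemma continuous_on_minor_vector:
  "continuous_on S (minor_vector :: real^'n::{finite,linorder}^'m::{finite,linorder} \<Rightarrow> _)"
  unfolding minor_vector_def
proof (intro continuous_on_vec_lambda)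
  fix p :: "'m \<times> 'm \<times> 'n \<times> 'n"
  have entry: "continuous_on S (\<lambda>X. X $ i $ k)" for i k
    by (intro linear_continuous_on bounded_linear_compose[OF bounded_linear_vec_nth bounded_linear_vec_nth])
  show "continuous_on S (\<lambda>X. if p \<in> minor_indices then minor2 p X else 0)"
  proof -
    obtain i j k l where p: "p = (i, j, k, l)"
      by (cases p)
    have "continuous_on S (minor2 p)"
      unfolding p minor2_def by (simp add: continuous_intros entry)
    then show ?thesis
      by (cases "p \<in> minor_indices") (simp_all add: continuous_on_const)
  qed
qed

lemma minor_form_positive_or_balanced:
  fixes K :: "(real^'n::{finite,linorder}^'m::{finite,linorder}) set"
  assumes K: "subspace K"
  obtains \<beta> where "\<And>X. X \<in> K \<Longrightarrow> X \<noteq> 0 \<Longrightarrow> 0 < (\<Sum>p\<in>minor_indices. \<beta> p * minor2 p X)"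
  | C w where "finite C" "C \<subseteq> K - {0}" "C \<noteq> {}" "\<And>X. X \<in> C \<Longrightarrow> 0 < w X"
      "\<And>p. p \<in> minor_indices \<Longrightarrow> (\<Sum>X\<in>C. w X * minor2 p X) = 0"
proof -
  define A where "A = K \<inter> sphere 0 1"
  have "compact (minor_vector ` A)"
    unfolding A_def
    by (intro compact_continuous_image continuous_on_minor_vector closed_Int_compact
        closed_subspace K compact_sphere)
  then show ?thesis
  proof (cases rule: compact_positive_functional_or_positive_combination)
    case (1 a)
    have "0 < (\<Sum>p\<in>minor_indices. a $ p * minor2 p X)" if "X \<in> K" "X \<noteq> 0" for X
    proof -
      have "X /\<^sub>R norm X \<in> A"
        using that K by (simp add: A_def subspace_scale)
      then have "0 < (inverse (norm X))\<^sup>2 * (a \<bullet> minor_vector X)"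
        using 1 by (force simp: minor_vector_scaleR)
      then show ?thesis
        by (simp add: zero_less_mult_iff inner_minor_vector)
    qed
    then show ?thesis using that(1) by blast
  next
    case (2 S u)
    then obtain C where C: "C \<subseteq> A" "inj_on minor_vector C" "S = minor_vector ` C"
      by (meson subset_image_inj)
    show ?thesis
    proof (rule that(2))
      show "finite C" "C \<noteq> {}"
        using 2 C finite_image_iff[OF C(2)] by auto
      show "C \<subseteq> K - {0}"
        using C(1) by (auto simp: A_def)
      show "\<And>X. X \<in> C \<Longrightarrow> 0 < u (minor_vector X)"
        using 2 C by auto
      fix p :: "'m \<times> 'm \<times> 'n \<times> 'n"
      assume "p \<in> minor_indices"
      have "(\<Sum>X\<in>C. u (minor_vector X) *\<^sub>R minor_vector X) = 0"
        using 2 C by (simp add: sum.reindex)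
      then have "(\<Sum>X\<in>C. u (minor_vector X) *\<^sub>R minor_vector X) $ p = 0"
        by simp
      then show "(\<Sum>X\<in>C. u (minor_vector X) * minor2 p X) = 0"
        using \<open>p \<in> minor_indices\<close> by (simp add: sum_component minor_vector_def)
    qed
  qed
qed

lemma has_rank1_connections_if_rank1_member:
  assumes "subspace K" "Y \<in> K" "rank Y = 1"
  shows "has_rank1_connections K"
proof -
  have "Y \<noteq> 0"
    using assms(3) by auto
  then show ?thesis
    unfolding has_rank1_connections_def using assms subspace_0
    by (intro bexI[of _ Y] bexI[of _ 0]) auto
qed

theorem lemma5:
  fixes K :: "(real^'n::{finite,linorder}^'m::{finite,linorder}) set"
    and d :: nat
  assumes "min CARD('m) CARD('n) = 2"
    and "d \<in> {2, 3}"
    and "subspace K"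
    and "dim K = d"
    and "\<not> has_rank1_connections K"
  shows "\<exists>\<beta> :: ('m \<times> 'm \<times> 'n \<times> 'n) \<Rightarrow> real.
           (\<exists>p\<in>minor_indices. \<beta> p \<noteq> 0)
         \<and> (\<forall>X\<in>K. (\<Sum>p\<in>minor_indices. \<beta> p * minor2 p X) \<ge> 0)
         \<and> (\<exists>X\<in>K. (\<Sum>p\<in>minor_indices. \<beta> p * minor2 p X) \<noteq> 0)"
proof -
  obtain X0 where X0: "X0 \<in> K" "X0 \<noteq> 0"
    using assms(2,4) dim_eq_0[of K] by auto
  from minor_form_positive_or_balanced[OF assms(3)] show ?thesis
  proof cases
    case (1 \<beta>)
    have nonneg: "0 \<le> (\<Sum>p\<in>minor_indices. \<beta> p * minor2 p X)" if "X \<in> K" for X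
      using 1[OF that] minor2_scaleR[of _ 0 X] by (cases "X = 0") auto
    have pos: "(\<Sum>p\<in>minor_indices. \<beta> p * minor2 p X0) \<noteq> 0"
      using 1[OF X0] by simp
    then have "\<exists>p\<in>minor_indices. \<beta> p \<noteq> 0"
      by (metis (no_types, lifting) mult_zero_left sum.neutral)
    with nonneg pos X0(1) show ?thesis
      by blast
  next
    case (2 C w)
    then obtain Y where "Y \<in> span C" "rank Y = 1"
      using rank1_in_span_if_weighted_minors_vanish[OF assms(1), of C w] by blast
    moreover have "span C \<subseteq> K"
      using 2 assms(3) by (intro span_minimal) auto
    ultimately show ?thesis
      using has_rank1_connections_if_rank1_member assms(3,5) by blast
  qed
qed

end
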